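(* The invariant functions $p_1,\dots,p_5$ are algebraically independent over $\mathbb C$ and $\mathbb C(\mathscr X_2)^G=\mathbb C(p_1,\dots,p_5)$.
   Context: Identify $V_1=V_2=\mathbb C^2$ with Pauli matrices $\sigma_1=\begin{pmatrix}0&1\\1&0\end{pmatrix}$, $\sigma_2=\begin{pmatrix}0&-i\\i&0\end{pmatrix}$, $\sigma_3=\begin{pmatrix}1&0\\0&-1\end{pmatrix}$. Trace-one endomorphisms of $\mathbb C^2\otimes\mathbb C^2$ are written uniquely as $\tfrac14\big(I\otimes I+\sum_a v_a\sigma_a\otimes I+\sum_b w_bI\otimes\sigma_b+\sum_{a,b}C_{ba}\sigma_a\otimes\sigma_b\big)$, giving coordinates $(v,w,C)\in\mathbb C^3\times\mathbb C^3\times M_3(\mathbb C)$ on the space $\mathscr L_2$; $G=\mathrm{SO}_3(\mathbb C)^2$ acts by $(g_1,g_2)\cdot(v,w,C)=(g_1v,g_2w,g_2Cg_1^{-1})$. $\langle x,y\rangle=\sum_a x_ay_a$ on $\mathbb C^3$. Let $X_0$ be the subspace with $v_1=v_2=w_1=w_2=0$ and $C_{ba}=0$ whenever exactly one of $a,b$ equals $3$; $\mathscr X_2$ is the Zariski closure of $G\cdot X_0$ (equivalently of the set of two-qubit X-states), with reduced structure. The functions $p_i$ are the restrictions to $\mathscr X_2$ of $p_1=\langle v,v\rangle$, $p_2=\langle w,w\rangle$, $p_3=\langle Cv,w\rangle$, $p_4=\operatorname{tr}(C^tC)$, $p_5=\det C$. *)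

theory Defs
  imports "HOL-Analysis.Analysis"
begin

inductive polyfn :: "('a \<Rightarrow> complex) set \<Rightarrow> ('a \<Rightarrow> complex) \<Rightarrow> bool"
  for Cs :: "('a \<Rightarrow> complex) set" where
  const: "polyfn Cs (\<lambda>x. c)"
| coord: "f \<in> Cs \<Longrightarrow> polyfn Cs f"
| add: "polyfn Cs f \<Longrightarrow> polyfn Cs g \<Longrightarrow> polyfn Cs (\<lambda>x. f x + g x)"
| mult: "polyfn Cs f \<Longrightarrow> polyfn Cs g \<Longrightarrow> polyfn Cs (\<lambda>x. f x * g x)"

text \<open>The space L_2 with coordinates (v, w, C); C $ b $ a is the entry C_{ba}.\<close>
type_synonym L2 = "(complex^3) \<times> (complex^3) \<times> (complex^3^3)"

definition L2_coords :: "(L2 \<Rightarrow> complex) set" where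
  "L2_coords = {(\<lambda>x::L2. fst x $ i) | i. True} \<union> {(\<lambda>x::L2. fst (snd x) $ i) | i. True}
     \<union> {(\<lambda>x::L2. snd (snd x) $ b $ a) | a b. True}"

definition L2_poly :: "(L2 \<Rightarrow> complex) \<Rightarrow> bool" where
  "L2_poly f = polyfn L2_coords f"

definition zariski_closure :: "L2 set \<Rightarrow> L2 set" where
  "zariski_closure S = {x. \<forall>f. L2_poly f \<longrightarrow> (\<forall>y\<in>S. f y = 0) \<longrightarrow> f x = 0}"

definition SO3 :: "(complex^3^3) set" where
  "SO3 = {g. transpose g ** g = mat 1 \<and> det g = 1}"

definition Grp :: "((complex^3^3) \<times> (complex^3^3)) set" where
  "Grp = SO3 \<times> SO3"

fun act :: "(complex^3^3) \<times> (complex^3^3) \<Rightarrow> L2 \<Rightarrow> L2" where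
  "act (g1, g2) (v, w, C) = (g1 *v v, g2 *v w, g2 ** C ** matrix_inv g1)"

definition X0 :: "L2 set" where
  "X0 = {(v, w, C). v $ 1 = 0 \<and> v $ 2 = 0 \<and> w $ 1 = 0 \<and> w $ 2 = 0 \<and>
           (\<forall>a b. ((a = 3) \<noteq> (b = 3)) \<longrightarrow> C $ b $ a = 0)}"

definition X2 :: "L2 set" where
  "X2 = zariski_closure (\<Union>h\<in>Grp. act h ` X0)"

definition bil :: "complex^3 \<Rightarrow> complex^3 \<Rightarrow> complex" where
  "bil x y = (\<Sum>a\<in>UNIV. x $ a * y $ a)"

fun p1 :: "L2 \<Rightarrow> complex" where "p1 (v, w, C) = bil v v"
fun p2 :: "L2 \<Rightarrow> complex" where "p2 (v, w, C) = bil w w"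
fun p3 :: "L2 \<Rightarrow> complex" where "p3 (v, w, C) = bil (C *v v) w"
fun p4 :: "L2 \<Rightarrow> complex" where "p4 (v, w, C) = trace (transpose C ** C)"
fun p5 :: "L2 \<Rightarrow> complex" where "p5 (v, w, C) = det C"

text \<open>The map x \<mapsto> (p1 x, ..., p5 x), with points of C^5 as functions nat \<Rightarrow> complex
  (only the coordinates 0..4 are used).\<close>
definition pmap :: "L2 \<Rightarrow> (nat \<Rightarrow> complex)" where
  "pmap x = (\<lambda>i. [p1 x, p2 x, p3 x, p4 x, p5 x] ! i)"

definition poly5 :: "((nat \<Rightarrow> complex) \<Rightarrow> complex) \<Rightarrow> bool" where
  "poly5 P = polyfn {(\<lambda>z. z i) | i. i < 5} P"

definition alg_indep_on_X2 :: bool where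
  "alg_indep_on_X2 \<longleftrightarrow> (\<forall>P. poly5 P \<longrightarrow> (\<forall>x\<in>X2. P (pmap x) = 0) \<longrightarrow> (\<forall>z. P z = 0))"

text \<open>Rational functions on X2: quotients f/g of polynomial functions with g not
  identically zero on X2; two are equal iff f1 g2 - f2 g1 vanishes on X2.\<close>
definition rat_fun :: "(L2 \<Rightarrow> complex) \<Rightarrow> (L2 \<Rightarrow> complex) \<Rightarrow> bool" where
  "rat_fun f g \<longleftrightarrow> L2_poly f \<and> L2_poly g \<and> \<not> (\<forall>x\<in>X2. g x = 0)"

definition rat_eq :: "(L2 \<Rightarrow> complex) \<Rightarrow> (L2 \<Rightarrow> complex) \<Rightarrow>
    (L2 \<Rightarrow> complex) \<Rightarrow> (L2 \<Rightarrow> complex) \<Rightarrow> bool" where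
  "rat_eq f1 g1 f2 g2 \<longleftrightarrow> (\<forall>x\<in>X2. f1 x * g2 x = f2 x * g1 x)"

definition G_invariant :: "(L2 \<Rightarrow> complex) \<Rightarrow> (L2 \<Rightarrow> complex) \<Rightarrow> bool" where
  "G_invariant f g \<longleftrightarrow> (\<forall>h\<in>Grp. rat_eq (f \<circ> act h) (g \<circ> act h) f g)"

definition in_Cp :: "(L2 \<Rightarrow> complex) \<Rightarrow> (L2 \<Rightarrow> complex) \<Rightarrow> bool" where
  "in_Cp f g \<longleftrightarrow> (\<exists>A B. poly5 A \<and> poly5 B \<and> \<not> (\<forall>x\<in>X2. B (pmap x) = 0) \<and>
       rat_eq f g (A \<circ> pmap) (B \<circ> pmap))"

end

theory Submission
  imports Defs "HOL-Computational_Algebra.Polynomial"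
begin

(* A rotation about
   the third axis in each factor of \<open>G\<close> brings a generic point of \<open>X0\<close> into a normal form, so
   every generic orbit meets the five-parameter slice \<open>slice w\<close>, on which
   \<open>(p1, ..., p5) = (w0\<^sup>2, w1\<^sup>2, w2, w3, w4)\<close>. Hence \<open>(p1, ..., p5)\<close> is dominant on \<open>X2\<close>, which
   gives algebraic independence, and every \<open>A(p) / B(p)\<close> is invariant. Conversely, an invariant
   \<open>f / g\<close> restricted to the slice is a rational function of \<open>w\<close> that is invariant under the
   sign changes of \<open>w0\<close> and \<open>w1\<close> (both are realised by half-turns in \<open>G\<close>), hence a quotient
   \<open>A / B\<close> of polynomials in \<open>(w0\<^sup>2, w1\<^sup>2, w2, w3, w4)\<close>. Then \<open>f / g - A(p) / B(p)\<close> is invariant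
   and vanishes on the slice, hence on its translates, which are dense in \<open>X2\<close>. *)

section \<open>Polynomial functions\<close>

lemma polyfn_comp:
  assumes "polyfn Cs f" and "\<And>c. c \<in> Cs \<Longrightarrow> polyfn Ds (\<lambda>x. c (\<phi> x))"
  shows "polyfn Ds (\<lambda>x. f (\<phi> x))"
  using assms(1) by induction (auto intro: polyfn.intros assms(2))

lemma polyfn_neg: "polyfn Cs f \<Longrightarrow> polyfn Cs (\<lambda>x. - f x)"
  using polyfn.mult[OF polyfn.const[of Cs "-1"]] by simp

lemma polyfn_diff: "polyfn Cs f \<Longrightarrow> polyfn Cs g \<Longrightarrow> polyfn Cs (\<lambda>x. f x - g x)"
  using polyfn.add[OF _ polyfn_neg, of Cs f g] by simp

lemma polyfn_power: "polyfn Cs f \<Longrightarrow> polyfn Cs (\<lambda>x. f x ^ n)"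
  by (induction n) (auto intro: polyfn.const polyfn.mult)

lemma polyfn_divide_const: "polyfn Cs f \<Longrightarrow> polyfn Cs (\<lambda>x. f x / c)"
  using polyfn.mult[OF _ polyfn.const[of Cs "1 / c"]] by simp

lemma polyfn_sum:
  "finite A \<Longrightarrow> (\<And>a. a \<in> A \<Longrightarrow> polyfn Cs (f a)) \<Longrightarrow> polyfn Cs (\<lambda>x. \<Sum>a\<in>A. f a x)"
  by (induction A rule: finite_induct) (auto intro: polyfn.const polyfn.add)

lemma polyfn_along_line:
  assumes "polyfn Cs f" and "\<And>c. c \<in> Cs \<Longrightarrow> \<exists>a b. \<forall>t. c (l t) = a + b * t"
  shows "\<exists>p. \<forall>t. f (l t) = poly p t"
  using assms(1)
proof induction
  case (const c)
  show ?case by (rule exI[of _ "[:c:]"]) simp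
next
  case (coord f)
  then obtain a b where "\<forall>t. f (l t) = a + b * t" using assms(2) by blast
  then show ?case by (intro exI[of _ "[:a, b:]"]) simp
next
  case (add f g)
  then obtain p q where "\<forall>t. f (l t) = poly p t" "\<forall>t. g (l t) = poly q t" by blast
  then show ?case by (intro exI[of _ "p + q"]) simp
next
  case (mult f g)
  then obtain p q where "\<forall>t. f (l t) = poly p t" "\<forall>t. g (l t) = poly q t" by blast
  then show ?case by (intro exI[of _ "p * q"]) simp
qed

definition coord_fns :: "nat \<Rightarrow> ((nat \<Rightarrow> complex) \<Rightarrow> complex) set" where
  "coord_fns n = {(\<lambda>z. z i) | i. i < n}"

lemma polyfn_coord: "i < n \<Longrightarrow> polyfn (coord_fns n) (\<lambda>z. z i)"
  by (rule polyfn.coord) (auto simp: coord_fns_def)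

lemma poly5_iff_polyfn_coord_fns: "poly5 P \<longleftrightarrow> polyfn (coord_fns 5) P"
  by (simp add: poly5_def coord_fns_def)

lemma polyfn_coord_fns_cong:
  assumes "polyfn (coord_fns n) P" and "\<And>i. i < n \<Longrightarrow> z i = z' i"
  shows "P z = P z'"
  using assms(1) by induction (auto simp: coord_fns_def assms(2))

lemma polyfn_eq_0_if_eq_0_off_zeros:
  assumes P: "polyfn (coord_fns n) P" and D: "polyfn (coord_fns n) D" and "D y \<noteq> 0"
    and vanish: "\<And>x. D x \<noteq> 0 \<Longrightarrow> P x = 0"
  shows "P z = 0"
proof -
  define l where "l t = (\<lambda>i. z i + t * (y i - z i))" for t
  have affine: "\<exists>a b. \<forall>t. c (l t) = a + b * t" if c: "c \<in> coord_fns n" for c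
  proof -
    obtain i where "c = (\<lambda>z. z i)" using c by (auto simp: coord_fns_def)
    then show ?thesis by (intro exI[of _ "z i"] exI[of _ "y i - z i"]) (simp add: l_def mult.commute)
  qed
  obtain p where p: "\<And>t. P (l t) = poly p t" using polyfn_along_line[where l = l, OF P affine] by blast
  obtain q where q: "\<And>t. D (l t) = poly q t" using polyfn_along_line[where l = l, OF D affine] by blast
  have "l 1 = y" "l 0 = z" by (auto simp: l_def)
  then have "q \<noteq> 0" using q[of 1] \<open>D y \<noteq> 0\<close> by auto
  then have "infinite (UNIV - {t. poly q t = 0})"
    by (intro Diff_infinite_finite poly_roots_finite infinite_UNIV_char_0)
  moreover have "UNIV - {t. poly q t = 0} \<subseteq> {t. poly p t = 0}"
    using vanish by (auto simp flip: p q)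
  ultimately have "infinite {t. poly p t = 0}" by (rule infinite_super[rotated])
  then have "p = 0" using poly_roots_finite by blast
  then show ?thesis using p[of 0] \<open>l 0 = z\<close> by simp
qed

lemma polyfn_eq_0_if_mult_eq_0:
  assumes "polyfn (coord_fns n) P" "polyfn (coord_fns n) D" "D y \<noteq> 0" "\<And>x. D x * P x = 0"
  shows "P z = 0"
  using polyfn_eq_0_if_eq_0_off_zeros[OF assms(1-3)] assms(4) by (metis mult_eq_0_iff)

lemma polyfn_mult_nonzero:
  assumes "polyfn (coord_fns n) P" "polyfn (coord_fns n) Q" "P a \<noteq> 0" "Q b \<noteq> 0"
  obtains x where "P x * Q x \<noteq> 0"
  using polyfn_eq_0_if_mult_eq_0[OF assms(2,1,3)] assms(4) by (metis mult.commute)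

lemma polyfn_comp_rational:
  assumes f: "polyfn Cs f" and D: "polyfn Ds D"
    and coords: "\<And>c. c \<in> Cs \<Longrightarrow> \<exists>Pc. polyfn Ds Pc \<and> (\<forall>w. D w \<noteq> 0 \<longrightarrow> c (\<phi> w) * D w = Pc w)"
  shows "\<exists>N F. polyfn Ds F \<and> (\<forall>w. D w \<noteq> 0 \<longrightarrow> f (\<phi> w) * D w ^ N = F w)"
  using f
proof induction
  case (const a)
  show ?case by (rule exI[of _ 0], rule exI[of _ "\<lambda>_. a"]) (simp add: polyfn.const)
next
  case (coord c)
  then obtain Pc where "polyfn Ds Pc" "\<forall>w. D w \<noteq> 0 \<longrightarrow> c (\<phi> w) * D w = Pc w"
    using coords by blast
  then show ?case by (intro exI[of _ 1] exI[of _ Pc]) simp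
next
  case (add f g)
  then obtain N1 F1 N2 F2 where h: "polyfn Ds F1" "\<forall>w. D w \<noteq> 0 \<longrightarrow> f (\<phi> w) * D w ^ N1 = F1 w"
    "polyfn Ds F2" "\<forall>w. D w \<noteq> 0 \<longrightarrow> g (\<phi> w) * D w ^ N2 = F2 w" by blast
  have "polyfn Ds (\<lambda>w. F1 w * D w ^ N2 + F2 w * D w ^ N1)"
    by (intro polyfn.add polyfn.mult polyfn_power h D)
  moreover have "\<forall>w. D w \<noteq> 0 \<longrightarrow>
      (f (\<phi> w) + g (\<phi> w)) * D w ^ (N1 + N2) = F1 w * D w ^ N2 + F2 w * D w ^ N1"
    using h(2,4) by (auto simp: power_add algebra_simps)
  ultimately show ?case by blast
next
  case (mult f g)
  then obtain N1 F1 N2 F2 where h: "polyfn Ds F1" "\<forall>w. D w \<noteq> 0 \<longrightarrow> f (\<phi> w) * D w ^ N1 = F1 w"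
    "polyfn Ds F2" "\<forall>w. D w \<noteq> 0 \<longrightarrow> g (\<phi> w) * D w ^ N2 = F2 w" by blast
  have "polyfn Ds (\<lambda>w. F1 w * F2 w)" by (intro polyfn.mult h)
  moreover have "\<forall>w. D w \<noteq> 0 \<longrightarrow> (f (\<phi> w) * g (\<phi> w)) * D w ^ (N1 + N2) = F1 w * F2 w"
    using h(2,4) by (auto simp: power_add algebra_simps)
  ultimately show ?case by blast
qed

section \<open>Functions of the squares of some coordinates\<close>

definition neg_coord :: "nat \<Rightarrow> (nat \<Rightarrow> complex) \<Rightarrow> nat \<Rightarrow> complex" where
  "neg_coord k w = w(k := - w k)"

definition sq_coord :: "nat \<Rightarrow> (nat \<Rightarrow> complex) \<Rightarrow> nat \<Rightarrow> complex" where
  "sq_coord k w = w(k := (w k)\<^sup>2)"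

lemma neg_coord_neg_coord [simp]: "neg_coord k (neg_coord k w) = w"
  by (simp add: neg_coord_def)

lemma sq_coord_neg_coord [simp]: "sq_coord k (neg_coord k w) = sq_coord k w"
  by (simp add: sq_coord_def neg_coord_def)

lemma sq_coord_neg_coord_commute:
  "j \<noteq> k \<Longrightarrow> sq_coord k (neg_coord j w) = neg_coord j (sq_coord k w)"
  by (auto simp: sq_coord_def neg_coord_def fun_upd_twist)

lemma sq_coord_csqrt: "sq_coord k (v(k := csqrt (v k))) = v"
  by (auto simp: sq_coord_def)

lemma polyfn_comp_fun_upd:
  assumes "polyfn (coord_fns n) P" and "polyfn (coord_fns n) c"
  shows "polyfn (coord_fns n) (\<lambda>w. P (w(k := c w)))"
proof (rule polyfn_comp[OF assms(1)])
  fix d assume "d \<in> coord_fns n"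
  then obtain i where "d = (\<lambda>z. z i)" "i < n" by (auto simp: coord_fns_def)
  then show "polyfn (coord_fns n) (\<lambda>w. d (w(k := c w)))"
    using assms(2) by (cases "i = k") (auto intro: polyfn_coord)
qed

lemma polyfn_neg_coord:
  "polyfn (coord_fns n) P \<Longrightarrow> k < n \<Longrightarrow> polyfn (coord_fns n) (\<lambda>w. P (neg_coord k w))"
  unfolding neg_coord_def by (intro polyfn_comp_fun_upd polyfn_neg polyfn_coord)

lemma polyfn_sq_coord:
  "polyfn (coord_fns n) P \<Longrightarrow> k < n \<Longrightarrow> polyfn (coord_fns n) (\<lambda>w. P (sq_coord k w))"
  unfolding sq_coord_def by (intro polyfn_comp_fun_upd polyfn_power polyfn_coord)

lemma polyfn_even_odd_decomp:
  assumes "polyfn (coord_fns n) P" and "k < n"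
  shows "\<exists>E Od. polyfn (coord_fns n) E \<and> polyfn (coord_fns n) Od \<and>
     (\<forall>w. P w = E (sq_coord k w) + w k * Od (sq_coord k w))"
  using assms(1)
proof induction
  case (const c)
  show ?case by (rule exI[of _ "\<lambda>_. c"], rule exI[of _ "\<lambda>_. 0"]) (auto intro: polyfn.const)
next
  case (coord f)
  then obtain j where f: "f = (\<lambda>z. z j)" and j: "j < n" by (auto simp: coord_fns_def)
  show ?case
  proof (cases "j = k")
    case True
    show ?thesis
      by (rule exI[of _ "\<lambda>_. 0"], rule exI[of _ "\<lambda>_. 1"]) (auto intro: polyfn.const simp: f True)
  next
    case False
    show ?thesis by (rule exI[of _ "\<lambda>z. z j"], rule exI[of _ "\<lambda>_. 0"])
      (auto intro: polyfn.const polyfn_coord j simp: f False sq_coord_def)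
  qed
next
  case (add f g)
  then obtain E1 Od1 E2 Od2 where h: "polyfn (coord_fns n) E1" "polyfn (coord_fns n) Od1"
    "polyfn (coord_fns n) E2" "polyfn (coord_fns n) Od2"
    "\<forall>w. f w = E1 (sq_coord k w) + w k * Od1 (sq_coord k w)"
    "\<forall>w. g w = E2 (sq_coord k w) + w k * Od2 (sq_coord k w)" by blast
  show ?case
    by (rule exI[of _ "\<lambda>z. E1 z + E2 z"], rule exI[of _ "\<lambda>z. Od1 z + Od2 z"])
      (auto intro: polyfn.add h simp: h(5,6) algebra_simps)
next
  case (mult f g)
  then obtain E1 Od1 E2 Od2 where h: "polyfn (coord_fns n) E1" "polyfn (coord_fns n) Od1"
    "polyfn (coord_fns n) E2" "polyfn (coord_fns n) Od2"
    "\<forall>w. f w = E1 (sq_coord k w) + w k * Od1 (sq_coord k w)"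
    "\<forall>w. g w = E2 (sq_coord k w) + w k * Od2 (sq_coord k w)" by blast
  have "polyfn (coord_fns n) (\<lambda>z. E1 z * E2 z + z k * (Od1 z * Od2 z))"
    by (intro polyfn.add polyfn.mult h polyfn_coord assms(2))
  moreover have "polyfn (coord_fns n) (\<lambda>z. E1 z * Od2 z + Od1 z * E2 z)"
    by (intro polyfn.add polyfn.mult h)
  moreover have "\<forall>w. f w * g w =
      (E1 (sq_coord k w) * E2 (sq_coord k w)
        + (sq_coord k w) k * (Od1 (sq_coord k w) * Od2 (sq_coord k w)))
      + w k * (E1 (sq_coord k w) * Od2 (sq_coord k w) + Od1 (sq_coord k w) * E2 (sq_coord k w))"
    by (simp add: h(5,6) sq_coord_def algebra_simps power2_eq_square)
  ultimately show ?case by blast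
qed

lemma polyfn_neg_coord_invariant_imp_sq:
  assumes "polyfn (coord_fns n) P" and "k < n" and "\<And>w. P (neg_coord k w) = P w"
  obtains E where "polyfn (coord_fns n) E" and "\<And>w. P w = E (sq_coord k w)"
proof -
  obtain E Od where E: "polyfn (coord_fns n) E"
    and decomp: "\<And>w. P w = E (sq_coord k w) + w k * Od (sq_coord k w)"
    using polyfn_even_odd_decomp[OF assms(1,2)] by blast
  have "P w = E (sq_coord k w)" for w
  proof -
    have "neg_coord k w k = - w k" by (simp add: neg_coord_def)
    then have "P (neg_coord k w) = E (sq_coord k w) - w k * Od (sq_coord k w)"
      using decomp[of "neg_coord k w"] by simp
    then show ?thesis using assms(3)[of w] decomp[of w] by simp
  qed
  with E show thesis by (rule that)
qed

lemma ratio_neg_coord_invariant_imp_sq: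
  assumes P: "polyfn (coord_fns n) P" and Q: "polyfn (coord_fns n) Q" and k: "k < n"
    and "Q y \<noteq> 0" and inv: "\<And>w. P (neg_coord k w) * Q w = P w * Q (neg_coord k w)"
  obtains P' Q' y' where "polyfn (coord_fns n) P'" "polyfn (coord_fns n) Q'" "Q' y' \<noteq> 0"
    and "\<And>w. P w * Q' (sq_coord k w) = P' (sq_coord k w) * Q w"
proof -
  \<comment> \<open>Expanding \<open>P / Q\<close> by \<open>Q \<circ> neg_coord k\<close> makes numerator and denominator invariant.\<close>
  define N where "N w = P w * Q (neg_coord k w)" for w
  define D where "D w = Q w * Q (neg_coord k w)" for w
  have "polyfn (coord_fns n) N" "polyfn (coord_fns n) D"
    unfolding N_def D_def by (intro polyfn.mult P Q polyfn_neg_coord k)+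
  moreover have "N (neg_coord k w) = N w" "D (neg_coord k w) = D w" for w
    using inv[of w] by (simp_all add: N_def D_def mult.commute)
  ultimately obtain P' Q' where P': "polyfn (coord_fns n) P'" "\<And>w. N w = P' (sq_coord k w)"
    and Q': "polyfn (coord_fns n) Q'" "\<And>w. D w = Q' (sq_coord k w)"
    using polyfn_neg_coord_invariant_imp_sq[OF _ k] by metis
  have "Q (neg_coord k (neg_coord k y)) \<noteq> 0" using \<open>Q y \<noteq> 0\<close> by simp
  then obtain x where "D x \<noteq> 0"
    using polyfn_mult_nonzero[OF Q polyfn_neg_coord[OF Q k] \<open>Q y \<noteq> 0\<close>] unfolding D_def by blast
  then have "Q' (sq_coord k x) \<noteq> 0" using Q' by simp
  moreover have "P w * Q' (sq_coord k w) = P' (sq_coord k w) * Q w" for w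
  proof -
    have "P w * D w = N w * Q w" by (simp add: N_def D_def ac_simps)
    then show ?thesis by (simp add: P'(2) Q'(2))
  qed
  ultimately show thesis using P'(1) Q'(1) by (rule_tac that)
qed

lemma ratio_neg_coord_invariant_transfer:
  assumes P: "polyfn (coord_fns n) P" and Q: "polyfn (coord_fns n) Q"
    and P': "polyfn (coord_fns n) P'" and Q': "polyfn (coord_fns n) Q'"
    and "Q y \<noteq> 0" and "j \<noteq> k" and "j < n" and "k < n"
    and inv: "\<And>w. P (neg_coord j w) * Q w = P w * Q (neg_coord j w)"
    and rel: "\<And>w. P w * Q' (sq_coord k w) = P' (sq_coord k w) * Q w"
  shows "P' (neg_coord j v) * Q' v = P' v * Q' (neg_coord j v)"
proof -
  \<comment> \<open>\<open>P' / Q'\<close> after \<open>sq_coord k\<close> is \<open>P / Q\<close>, and \<open>neg_coord j\<close> commutes with \<open>sq_coord k\<close>;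
    squaring is onto, so the invariance descends.\<close>
  define X where "X w = P' (neg_coord j (sq_coord k w)) * Q' (sq_coord k w)
      - P' (sq_coord k w) * Q' (neg_coord j (sq_coord k w))" for w
  have pX: "polyfn (coord_fns n) X" unfolding X_def
    by (intro polyfn_diff polyfn.mult polyfn_sq_coord polyfn_neg_coord P' Q' \<open>j < n\<close> \<open>k < n\<close>)
  have "Q (neg_coord j (neg_coord j y)) \<noteq> 0" using \<open>Q y \<noteq> 0\<close> by simp
  then obtain x where x: "Q x * Q (neg_coord j x) \<noteq> 0"
    using polyfn_mult_nonzero[OF Q polyfn_neg_coord[OF Q \<open>j < n\<close>] \<open>Q y \<noteq> 0\<close>] by blast
  have "(Q w * Q (neg_coord j w)) * X w = 0" for w
  proof -
    have rel': "P (neg_coord j w) * Q' (neg_coord j (sq_coord k w))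
        = P' (neg_coord j (sq_coord k w)) * Q (neg_coord j w)"
      using rel[of "neg_coord j w"] sq_coord_neg_coord_commute[OF \<open>j \<noteq> k\<close>] by simp
    have "(Q w * Q (neg_coord j w)) * X w
      = (P' (neg_coord j (sq_coord k w)) * Q (neg_coord j w)) * Q' (sq_coord k w) * Q w
        - (P' (sq_coord k w) * Q w) * Q' (neg_coord j (sq_coord k w)) * Q (neg_coord j w)"
      by (simp add: X_def algebra_simps)
    also have "\<dots> = (P (neg_coord j w) * Q' (neg_coord j (sq_coord k w))) * Q' (sq_coord k w) * Q w
        - (P w * Q' (sq_coord k w)) * Q' (neg_coord j (sq_coord k w)) * Q (neg_coord j w)"
      by (simp only: rel rel')
    also have "\<dots> = Q' (sq_coord k w) * Q' (neg_coord j (sq_coord k w))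
        * (P (neg_coord j w) * Q w - P w * Q (neg_coord j w))"
      by (simp add: algebra_simps)
    also have "\<dots> = 0" using inv[of w] by simp
    finally show ?thesis .
  qed
  then have "X w = 0" for w
    using polyfn_eq_0_if_mult_eq_0[OF pX polyfn.mult[OF Q polyfn_neg_coord[OF Q \<open>j < n\<close>]] x] by blast
  from this[of "v(k := csqrt (v k))"] show ?thesis by (simp add: X_def sq_coord_csqrt)
qed

lemma ratio_two_neg_coord_invariant_imp_sq:
  assumes P: "polyfn (coord_fns n) P" and Q: "polyfn (coord_fns n) Q" and "Q y \<noteq> 0"
    and "k < n" and "j < n" and "j \<noteq> k"
    and inv_k: "\<And>w. P (neg_coord k w) * Q w = P w * Q (neg_coord k w)"
    and inv_j: "\<And>w. P (neg_coord j w) * Q w = P w * Q (neg_coord j w)"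
  obtains A B z where "polyfn (coord_fns n) A" "polyfn (coord_fns n) B" "B z \<noteq> 0"
    and "\<And>w. P w * B (sq_coord j (sq_coord k w)) = A (sq_coord j (sq_coord k w)) * Q w"
proof -
  obtain P' Q' y' where P': "polyfn (coord_fns n) P'" and Q': "polyfn (coord_fns n) Q'"
    and "Q' y' \<noteq> 0" and rel: "\<And>w. P w * Q' (sq_coord k w) = P' (sq_coord k w) * Q w"
    using ratio_neg_coord_invariant_imp_sq[OF P Q \<open>k < n\<close> \<open>Q y \<noteq> 0\<close> inv_k] by blast
  have "P' (neg_coord j v) * Q' v = P' v * Q' (neg_coord j v)" for v
    using ratio_neg_coord_invariant_transfer[OF P Q P' Q'] assms(3-6) inv_j rel by blast
  then obtain A B z where A: "polyfn (coord_fns n) A" and B: "polyfn (coord_fns n) B"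
    and "B z \<noteq> 0" and rel': "\<And>v. P' v * B (sq_coord j v) = A (sq_coord j v) * Q' v"
    using ratio_neg_coord_invariant_imp_sq[OF P' Q' \<open>j < n\<close> \<open>Q' y' \<noteq> 0\<close>] by blast
  define X where "X w = P w * B (sq_coord j (sq_coord k w)) - A (sq_coord j (sq_coord k w)) * Q w" for w
  have pX: "polyfn (coord_fns n) X"
    unfolding X_def by (intro polyfn_diff polyfn.mult P Q polyfn_sq_coord A B assms(4,5))
  have "Q' (sq_coord k w) * X w = 0" for w
  proof -
    have "Q' (sq_coord k w) * (P w * B (sq_coord j (sq_coord k w)))
        = (P' (sq_coord k w) * B (sq_coord j (sq_coord k w))) * Q w"
      using rel[of w] by (metis mult.assoc mult.commute)
    also have "\<dots> = A (sq_coord j (sq_coord k w)) * Q' (sq_coord k w) * Q w"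
      by (simp only: rel')
    finally show ?thesis by (simp add: X_def algebra_simps)
  qed
  moreover have "Q' (sq_coord k (y'(k := csqrt (y' k)))) \<noteq> 0"
    using \<open>Q' y' \<noteq> 0\<close> by (simp add: sq_coord_csqrt)
  ultimately have "X w = 0" for w
    using polyfn_eq_0_if_mult_eq_0[OF pX polyfn_sq_coord[OF Q' \<open>k < n\<close>]] by blast
  then show thesis using that[OF A B \<open>B z \<noteq> 0\<close>] by (simp add: X_def)
qed

section \<open>The group and its invariants\<close>

lemma SO3_transpose_mult: "g \<in> SO3 \<Longrightarrow> transpose g ** g = mat 1"
  by (simp add: SO3_def)

lemma SO3_mult_transpose: "g \<in> SO3 \<Longrightarrow> g ** transpose g = mat 1"
  unfolding SO3_def using matrix_left_right_inverse by blast

lemma matrix_inv_SO3: "g \<in> SO3 \<Longrightarrow> matrix_inv g = transpose g"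
proof -
  assume g: "g \<in> SO3"
  then have "\<exists>g'. g ** g' = mat 1 \<and> g' ** g = mat 1"
    using SO3_transpose_mult SO3_mult_transpose by blast
  then have "g ** matrix_inv g = mat 1"
    unfolding matrix_inv_def by (metis (mono_tags, lifting) someI_ex)
  then have "(transpose g ** g) ** matrix_inv g = transpose g"
    by (simp add: matrix_mul_assoc[symmetric])
  then show ?thesis using SO3_transpose_mult[OF g] by simp
qed

lemma SO3_mult: "g \<in> SO3 \<Longrightarrow> h \<in> SO3 \<Longrightarrow> g ** h \<in> SO3"
proof -
  assume g: "g \<in> SO3" and h: "h \<in> SO3"
  have "transpose (g ** h) ** (g ** h) = transpose h ** (transpose g ** g) ** h"
    by (simp add: matrix_transpose_mul matrix_mul_assoc)
  also have "\<dots> = mat 1" using SO3_transpose_mult[OF g] SO3_transpose_mult[OF h] by simp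
  finally show ?thesis using g h by (simp add: SO3_def det_mul)
qed

lemma SO3_transpose: "g \<in> SO3 \<Longrightarrow> transpose g \<in> SO3"
  using SO3_mult_transpose[of g] by (simp add: SO3_def det_transpose)

lemma mat_1_SO3: "mat 1 \<in> SO3"
  by (simp add: SO3_def det_I)

definition grp_mult :: "(complex^3^3) \<times> (complex^3^3) \<Rightarrow> (complex^3^3) \<times> (complex^3^3)
    \<Rightarrow> (complex^3^3) \<times> (complex^3^3)" where
  "grp_mult h k = (fst h ** fst k, snd h ** snd k)"

definition grp_inv :: "(complex^3^3) \<times> (complex^3^3) \<Rightarrow> (complex^3^3) \<times> (complex^3^3)" where
  "grp_inv h = (transpose (fst h), transpose (snd h))"

lemma grp_mult_Grp: "h \<in> Grp \<Longrightarrow> k \<in> Grp \<Longrightarrow> grp_mult h k \<in> Grp"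
  by (auto simp: Grp_def grp_mult_def SO3_mult)

lemma grp_inv_Grp: "h \<in> Grp \<Longrightarrow> grp_inv h \<in> Grp"
  by (auto simp: Grp_def grp_inv_def SO3_transpose)

lemma one_Grp: "(mat 1, mat 1) \<in> Grp"
  by (simp add: Grp_def mat_1_SO3)

lemma act_split: "act (g1, g2) x = (g1 *v fst x, g2 *v fst (snd x), g2 ** snd (snd x) ** matrix_inv g1)"
  by (cases x) auto

lemma act_act: "h \<in> Grp \<Longrightarrow> k \<in> Grp \<Longrightarrow> act h (act k x) = act (grp_mult h k) x"
proof -
  assume "h \<in> Grp" "k \<in> Grp"
  moreover obtain h1 h2 k1 k2 where "h = (h1, h2)" "k = (k1, k2)" by fastforce
  ultimately have "h1 \<in> SO3" "h2 \<in> SO3" "k1 \<in> SO3" "k2 \<in> SO3" "h1 ** k1 \<in> SO3"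
    and "h = (h1, h2)" "k = (k1, k2)" by (auto simp: Grp_def SO3_mult)
  then show ?thesis
    by (simp add: act_split grp_mult_def matrix_inv_SO3 matrix_vector_mul_assoc
        matrix_transpose_mul matrix_mul_assoc)
qed

lemma act_one: "act (mat 1, mat 1) x = x"
  by (simp add: act_split matrix_inv_SO3[OF mat_1_SO3])

lemma act_grp_inv_act: "h \<in> Grp \<Longrightarrow> act (grp_inv h) (act h x) = x"
proof -
  assume h: "h \<in> Grp"
  then have "grp_mult (grp_inv h) h = (mat 1, mat 1)"
    by (auto simp: grp_mult_def grp_inv_def Grp_def SO3_transpose_mult)
  then show ?thesis using act_act[OF grp_inv_Grp[OF h] h] act_one by simp
qed

lemma act_act_grp_inv: "h \<in> Grp \<Longrightarrow> act h (act (grp_inv h) x) = x"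
proof -
  assume h: "h \<in> Grp"
  then have "grp_mult h (grp_inv h) = (mat 1, mat 1)"
    by (auto simp: grp_mult_def grp_inv_def Grp_def SO3_mult_transpose)
  then show ?thesis using act_act[OF h grp_inv_Grp[OF h]] act_one by simp
qed

lemma bil_matrix_vector_mult: "bil (A *v x) y = bil x (transpose A *v y)"
  by (simp add: bil_def matrix_vector_mult_def transpose_def sum_3 algebra_simps)

lemma bil_SO3: "g \<in> SO3 \<Longrightarrow> bil (g *v x) (g *v y) = bil x y"
  by (simp add: bil_matrix_vector_mult matrix_vector_mul_assoc SO3_transpose_mult)

lemma trace_SO3_conj: "g \<in> SO3 \<Longrightarrow> trace (g ** M ** transpose g) = trace M"
  by (metis SO3_transpose_mult matrix_mul_assoc matrix_mul_rid trace_mul_sym)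

lemma p_act:
  assumes "h \<in> Grp"
  shows "p1 (act h x) = p1 x" "p2 (act h x) = p2 x" "p3 (act h x) = p3 x"
    "p4 (act h x) = p4 x" "p5 (act h x) = p5 x"
proof -
  obtain g1 g2 v w C where hx: "h = (g1, g2)" "x = (v, w, C)" by (cases h, cases x) auto
  then have g: "g1 \<in> SO3" "g2 \<in> SO3" using assms by (auto simp: Grp_def)
  then have act: "act h x = (g1 *v v, g2 *v w, g2 ** C ** transpose g1)"
    by (simp add: hx matrix_inv_SO3)
  show "p1 (act h x) = p1 x" "p2 (act h x) = p2 x" using g unfolding act by (simp_all add: hx bil_SO3)
  have "(g2 ** C ** transpose g1) *v (g1 *v v) = g2 *v (C *v v)"
    using g by (simp add: matrix_vector_mul_assoc matrix_mul_assoc[symmetric] SO3_transpose_mult)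
  then show "p3 (act h x) = p3 x" using g unfolding act by (simp add: hx bil_SO3)
  have "transpose (g2 ** C ** transpose g1) ** (g2 ** C ** transpose g1)
      = g1 ** transpose C ** (transpose g2 ** g2) ** C ** transpose g1"
    by (simp add: matrix_transpose_mul matrix_mul_assoc)
  then have "transpose (g2 ** C ** transpose g1) ** (g2 ** C ** transpose g1)
      = g1 ** (transpose C ** C) ** transpose g1"
    using g by (simp add: SO3_transpose_mult matrix_mul_assoc)
  then show "p4 (act h x) = p4 x" using g unfolding act by (simp add: hx trace_SO3_conj)
  show "p5 (act h x) = p5 x" using g unfolding act by (simp add: hx det_mul det_transpose SO3_def)
qed

lemma pmap_act: "h \<in> Grp \<Longrightarrow> pmap (act h x) = pmap x"
  by (simp add: pmap_def p_act)

lemma polyfn_L2_coords_v: "polyfn L2_coords (\<lambda>x::L2. fst x $ i)"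
  and polyfn_L2_coords_w: "polyfn L2_coords (\<lambda>x::L2. fst (snd x) $ i)"
  and polyfn_L2_coords_C: "polyfn L2_coords (\<lambda>x::L2. snd (snd x) $ b $ a)"
  by (rule polyfn.coord, auto simp: L2_coords_def)+

lemma L2_poly_comp:
  assumes "L2_poly f"
    and "\<And>i. polyfn Ds (\<lambda>x. fst (\<phi> x) $ i)" "\<And>i. polyfn Ds (\<lambda>x. fst (snd (\<phi> x)) $ i)"
    and "\<And>a b. polyfn Ds (\<lambda>x. snd (snd (\<phi> x)) $ b $ a)"
  shows "polyfn Ds (\<lambda>x. f (\<phi> x))"
  using assms(1) unfolding L2_poly_def
  by (rule polyfn_comp) (auto simp: L2_coords_def assms(2-4))

lemma polyfn_matrix_vector_mult:
  assumes "\<And>a b. polyfn Cs (\<lambda>x. M x $ a $ b)" and "\<And>j. polyfn Cs (\<lambda>x. V x $ j)"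
  shows "polyfn Cs (\<lambda>x. (M x *v V x) $ i)"
  unfolding matrix_vector_mult_def by (simp, intro polyfn_sum polyfn.mult assms) auto

lemma polyfn_matrix_matrix_mult:
  assumes "\<And>a b. polyfn Cs (\<lambda>x. A x $ a $ b)" and "\<And>a b. polyfn Cs (\<lambda>x. B x $ a $ b)"
  shows "polyfn Cs (\<lambda>x. (A x ** B x) $ a $ b)"
  unfolding matrix_matrix_mult_def by (simp, intro polyfn_sum polyfn.mult assms) auto

lemma L2_poly_act: "L2_poly f \<Longrightarrow> L2_poly (\<lambda>x. f (act h x))"
  unfolding L2_poly_def[of "\<lambda>x. f (act h x)"]
  by (cases h, erule L2_poly_comp)
    (simp_all add: act_split polyfn_matrix_vector_mult polyfn_matrix_matrix_mult
      polyfn.const polyfn_L2_coords_v polyfn_L2_coords_w polyfn_L2_coords_C)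

lemma polyfn_bil:
  "(\<And>j. polyfn Cs (\<lambda>x. V x $ j)) \<Longrightarrow> (\<And>j. polyfn Cs (\<lambda>x. W x $ j))
    \<Longrightarrow> polyfn Cs (\<lambda>x. bil (V x) (W x))"
  unfolding bil_def by (intro polyfn_sum polyfn.mult) auto

lemma L2_poly_p: "L2_poly p1" "L2_poly p2" "L2_poly p3" "L2_poly p4" "L2_poly p5"
proof -
  have p: "p1 = (\<lambda>x. bil (fst x) (fst x))" "p2 = (\<lambda>x. bil (fst (snd x)) (fst (snd x)))"
    "p3 = (\<lambda>x. bil (snd (snd x) *v fst x) (fst (snd x)))"
    "p4 = (\<lambda>x. trace (transpose (snd (snd x)) ** snd (snd x)))"
    "p5 = (\<lambda>x. det (snd (snd x)))"
    by (auto simp: fun_eq_iff)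
  show "L2_poly p1" "L2_poly p2" "L2_poly p3" unfolding L2_poly_def p
    by (intro polyfn_bil polyfn_matrix_vector_mult polyfn_L2_coords_v polyfn_L2_coords_w polyfn_L2_coords_C)+
  show "L2_poly p4" unfolding L2_poly_def p trace_def
    by (intro polyfn_sum polyfn_matrix_matrix_mult) (auto simp: transpose_def polyfn_L2_coords_C)
  show "L2_poly p5" unfolding L2_poly_def p det_3
    by (intro polyfn_diff polyfn.add polyfn.mult polyfn_L2_coords_C)
qed

lemma L2_poly_pmap: "poly5 P \<Longrightarrow> L2_poly (\<lambda>x. P (pmap x))"
  unfolding poly5_def L2_poly_def
proof (erule polyfn_comp)
  fix c :: "(nat \<Rightarrow> complex) \<Rightarrow> complex" assume "c \<in> {\<lambda>z. z i |i. i < 5}"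
  then obtain i where "c = (\<lambda>z. z i)" "i < 5" by blast
  then show "polyfn L2_coords (\<lambda>x. c (pmap x))"
    using L2_poly_p unfolding L2_poly_def
    by (auto simp: pmap_def less_Suc_eq numeral_eq_Suc)
qed

lemma L2_poly_diff: "L2_poly f \<Longrightarrow> L2_poly g \<Longrightarrow> L2_poly (\<lambda>x. f x - g x)"
  and L2_poly_mult: "L2_poly f \<Longrightarrow> L2_poly g \<Longrightarrow> L2_poly (\<lambda>x. f x * g x)"
  unfolding L2_poly_def by (rule polyfn_diff polyfn.mult; assumption)+

section \<open>Normal forms on \<open>X0\<close> and a slice through the generic orbits\<close>

definition X0_param :: "(nat \<Rightarrow> complex) \<Rightarrow> L2" where
  "X0_param u = (vector [0, 0, u 0], vector [0, 0, u 1],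
     vector [vector [u 3, u 4, 0], vector [u 5, u 6, 0], vector [0, 0, u 2]])"

lemma X0_param_in_X0: "X0_param u \<in> X0"
  unfolding X0_param_def X0_def by (auto simp: forall_3)

lemma X0_obtain_param:
  assumes "x \<in> X0"
  obtains u where "x = X0_param u"
proof -
  obtain v w C where x: "x = (v, w, C)" by (cases x)
  define u where "u = (\<lambda>i::nat. [v$3, w$3, C$3$3, C$1$1, C$1$2, C$2$1, C$2$2] ! i)"
  have "v$1 = 0" "v$2 = 0" "w$1 = 0" "w$2 = 0" "\<And>a b. (a = 3) \<noteq> (b = 3) \<Longrightarrow> C$b$a = 0"
    using assms by (auto simp: X0_def x)
  then have "x = X0_param u"
    unfolding x X0_param_def u_def by (simp add: vec_eq_iff forall_3)
  then show thesis by (rule that)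
qed

lemma polyfn_X0_param: "L2_poly f \<Longrightarrow> polyfn (coord_fns 7) (\<lambda>u. f (X0_param u))"
proof (erule L2_poly_comp)
  have c: "\<And>i. i < 7 \<Longrightarrow> polyfn (coord_fns 7) (\<lambda>u. u i)" by (rule polyfn_coord)
  have z: "polyfn (coord_fns 7) (\<lambda>u. 0)" by (rule polyfn.const)
  fix i a b :: 3
  show "polyfn (coord_fns 7) (\<lambda>x. fst (X0_param x) $ i)"
    and "polyfn (coord_fns 7) (\<lambda>x. fst (snd (X0_param x)) $ i)"
    using exhaust_3[of i] by (auto simp: X0_param_def c z)
  show "polyfn (coord_fns 7) (\<lambda>x. snd (snd (X0_param x)) $ b $ a)"
    using exhaust_3[of a] exhaust_3[of b] by (auto simp: X0_param_def c z)
qed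

definition slice_coords :: "(nat \<Rightarrow> complex) \<Rightarrow> nat \<Rightarrow> complex" where
  "slice_coords u = (\<lambda>i. [u 0, u 1, u 2 * u 0 * u 1,
      (u 2)\<^sup>2 + (u 3)\<^sup>2 + (u 4)\<^sup>2 + (u 5)\<^sup>2 + (u 6)\<^sup>2, u 2 * (u 3 * u 6 - u 4 * u 5)] ! i)"

lemma pmap_X0_param:
  assumes "i < 5"
  shows "pmap (X0_param u) i = sq_coord 1 (sq_coord 0 (slice_coords u)) i"
proof -
  have "i = 0 \<or> i = 1 \<or> i = 2 \<or> i = 3 \<or> i = 4" using assms by auto
  then show ?thesis
    unfolding pmap_def slice_coords_def X0_param_def sq_coord_def
    by (elim disjE) (simp_all add: bil_def sum_3 matrix_vector_mult_def trace_def transpose_def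
        matrix_matrix_mult_def det_3 power2_eq_square algebra_simps)
qed

text \<open>\<open>X0_param (std_param a b c T D)\<close> has \<open>tr (C\<^sup>T C) = c\<^sup>2 + T\<close> and \<open>det C = c D\<close>, and both
  isotropic coordinates \<open>block_p\<close>, \<open>block_q\<close> of its \<open>2\<times>2\<close> block equal \<open>1\<close>.\<close>

definition std_param :: "complex \<Rightarrow> complex \<Rightarrow> complex \<Rightarrow> complex \<Rightarrow> complex \<Rightarrow> nat \<Rightarrow> complex" where
  "std_param a b c T D = (\<lambda>i. [a, b, c, (T + 1) / 2, - \<i> * D, \<i> * (T - 1) / 2, D] ! i)"

definition block_p :: "(nat \<Rightarrow> complex) \<Rightarrow> complex" where
  "block_p u = (u 3 + u 6) + \<i> * (u 5 - u 4)"

definition block_q :: "(nat \<Rightarrow> complex) \<Rightarrow> complex" where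
  "block_q u = (u 3 - u 6) + \<i> * (u 4 + u 5)"

definition X0_normal_form :: "(nat \<Rightarrow> complex) \<Rightarrow> nat \<Rightarrow> complex" where
  "X0_normal_form u = std_param (u 0) (u 1) (u 2)
     ((u 3)\<^sup>2 + (u 4)\<^sup>2 + (u 5)\<^sup>2 + (u 6)\<^sup>2) (u 3 * u 6 - u 4 * u 5)"

text \<open>The rotation about the third axis with eigenvalue \<open>e\<close> on \<open>(1, -\<i>, 0)\<close> and \<open>f\<close> on
  \<open>(1, \<i>, 0)\<close>; it lies in \<open>SO3\<close> when \<open>e f = 1\<close>.\<close>

definition rot3 :: "complex \<Rightarrow> complex \<Rightarrow> complex^3^3" where
  "rot3 e f = vector [vector [(e + f) / 2, \<i> * (e - f) / 2, 0],
     vector [- \<i> * (e - f) / 2, (e + f) / 2, 0], vector [0, 0, 1]]"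

lemma rot3_SO3:
  assumes "e * f = 1"
  shows "rot3 e f \<in> SO3"
proof -
  have "transpose (rot3 e f) ** rot3 e f = mat 1"
    unfolding rot3_def
    by (simp add: vec_eq_iff forall_3 matrix_matrix_mult_def transpose_def sum_3 mat_def)
      (use assms i_squared in algebra)+
  moreover have "det (rot3 e f) = 1"
    unfolding rot3_def det_3 by simp (use assms i_squared in algebra)
  ultimately show ?thesis by (simp add: SO3_def)
qed

lemma act_rot3_X0_param:
  assumes "e1 * f1 = 1" "e2 * f2 = 1" "e1 * e2 * block_q u = 1" "e2 * f1 * block_p u = 1"
    "e1 * f2 = block_p u" "f1 * f2 = block_q u"
  shows "act (rot3 e1 f1, rot3 e2 f2) (X0_param u) = X0_param (X0_normal_form u)"
  unfolding act_split matrix_inv_SO3[OF rot3_SO3[OF assms(1)]]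
  unfolding X0_param_def X0_normal_form_def std_param_def rot3_def
  apply (simp add: vec_eq_iff forall_3 matrix_matrix_mult_def matrix_vector_mult_def transpose_def sum_3)
  apply (intro conjI; simp add: field_simps)
  by (use assms[unfolded block_p_def block_q_def] i_squared in algebra)+

lemma X0_param_normal_form:
  assumes "block_p u \<noteq> 0" and "block_q u \<noteq> 0"
  obtains h where "h \<in> Grp" and "act h (X0_param u) = X0_param (X0_normal_form u)"
proof -
  define r where "r = csqrt (block_p u * block_q u)"
  have r2: "r * r = block_p u * block_q u" unfolding r_def by (metis power2_csqrt power2_eq_square)
  then have "r \<noteq> 0" using assms by auto
  then have "act (rot3 (block_p u / r) (r / block_p u), rot3 (1 / r) r) (X0_param u)
      = X0_param (X0_normal_form u)"
    using assms r2 by (intro act_rot3_X0_param) (simp_all add: field_simps)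
  moreover have "(rot3 (block_p u / r) (r / block_p u), rot3 (1 / r) r) \<in> Grp"
    using assms \<open>r \<noteq> 0\<close> by (simp add: Grp_def rot3_SO3)
  ultimately show thesis using that by blast
qed

text \<open>\<open>c\<close>, \<open>T\<close> and \<open>D\<close> are solved from \<open>p3 = w2\<close>, \<open>p4 = w3\<close>, \<open>p5 = w4\<close>.\<close>

definition slice_param :: "(nat \<Rightarrow> complex) \<Rightarrow> nat \<Rightarrow> complex" where
  "slice_param w = (let c = w 2 / (w 0 * w 1) in std_param (w 0) (w 1) c (w 3 - c\<^sup>2) (w 4 / c))"

definition slice :: "(nat \<Rightarrow> complex) \<Rightarrow> L2" where
  "slice w = X0_param (slice_param w)"

definition slice_denom :: "(nat \<Rightarrow> complex) \<Rightarrow> complex" where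
  "slice_denom w = w 0 * w 1 * w 2"

lemma slice_cong: "(\<And>i. i < 5 \<Longrightarrow> w i = w' i) \<Longrightarrow> slice w = slice w'"
  by (simp add: slice_def slice_param_def)

lemma slice_coords_slice_param:
  assumes "slice_denom w \<noteq> 0" and "i < 5"
  shows "slice_coords (slice_param w) i = w i"
proof -
  have "w 0 \<noteq> 0" "w 1 \<noteq> 0" "w 2 \<noteq> 0" using assms(1) by (auto simp: slice_denom_def)
  moreover have "i = 0 \<or> i = 1 \<or> i = 2 \<or> i = 3 \<or> i = 4" using assms(2) by auto
  ultimately show ?thesis
    unfolding slice_coords_def slice_param_def std_param_def Let_def
    by (elim disjE) (simp_all add: field_simps power2_eq_square)
qed

lemma pmap_slice:
  assumes "slice_denom w \<noteq> 0" and "i < 5"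
  shows "pmap (slice w) i = sq_coord 1 (sq_coord 0 w) i"
  using assms by (simp add: slice_def pmap_X0_param sq_coord_def slice_coords_slice_param)

lemma poly5_pmap_slice:
  "poly5 P \<Longrightarrow> slice_denom w \<noteq> 0 \<Longrightarrow> P (pmap (slice w)) = P (sq_coord 1 (sq_coord 0 w))"
  unfolding poly5_iff_polyfn_coord_fns by (erule polyfn_coord_fns_cong) (rule pmap_slice)

lemma sq_coord_1_0_csqrt:
  "sq_coord 1 (sq_coord 0 (z(0 := csqrt (z 0), 1 := csqrt (z 1)))) = z"
  by (auto simp: sq_coord_def fun_eq_iff)

definition X0_genericity :: "(nat \<Rightarrow> complex) \<Rightarrow> complex" where
  "X0_genericity u = u 0 * u 1 * u 2 * block_p u * block_q u"

lemma polyfn_X0_genericity: "polyfn (coord_fns 7) X0_genericity"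
  unfolding X0_genericity_def block_p_def block_q_def
  by (intro polyfn.mult polyfn.add polyfn_diff polyfn.const polyfn_coord) simp_all

lemma X0_param_in_slice_orbit:
  assumes "X0_genericity u \<noteq> 0"
  obtains h where "h \<in> Grp" and "act h (X0_param u) = slice (slice_coords u)"
proof -
  have "block_p u \<noteq> 0" "block_q u \<noteq> 0" "u 0 * u 1 * u 2 \<noteq> 0"
    using assms by (auto simp: X0_genericity_def)
  moreover have "X0_normal_form u = slice_param (slice_coords u)" if "u 0 * u 1 * u 2 \<noteq> 0"
    using that unfolding X0_normal_form_def slice_param_def slice_coords_def Let_def
    by (simp add: add.assoc)
  ultimately show thesis using X0_param_normal_form that by (metis slice_def)
qed

lemma slice_denom_slice_coords: "X0_genericity u \<noteq> 0 \<Longrightarrow> slice_denom (slice_coords u) \<noteq> 0"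
  by (simp add: X0_genericity_def slice_denom_def slice_coords_def)

definition half_turn :: "complex^3^3" where
  "half_turn = vector [vector [1, 0, 0], vector [0, -1, 0], vector [0, 0, -1]]"

lemma half_turn_SO3: "half_turn \<in> SO3"
  unfolding SO3_def half_turn_def det_3
  by (simp add: vec_eq_iff forall_3 matrix_matrix_mult_def transpose_def sum_3 mat_def)

lemma half_turn_Grp: "(half_turn, mat 1) \<in> Grp" "(mat 1, half_turn) \<in> Grp"
  by (simp_all add: Grp_def half_turn_SO3 mat_1_SO3)

definition flip_v :: "(nat \<Rightarrow> complex) \<Rightarrow> nat \<Rightarrow> complex" where
  "flip_v u = (\<lambda>i. [- u 0, u 1, - u 2, u 3, - u 4, u 5, - u 6] ! i)"

definition flip_w :: "(nat \<Rightarrow> complex) \<Rightarrow> nat \<Rightarrow> complex" where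
  "flip_w u = (\<lambda>i. [u 0, - u 1, - u 2, u 3, u 4, - u 5, - u 6] ! i)"

lemma act_half_turn_left: "act (half_turn, mat 1) (X0_param u) = X0_param (flip_v u)"
  unfolding act_split matrix_inv_SO3[OF half_turn_SO3]
  unfolding X0_param_def half_turn_def flip_v_def
  by (simp add: vec_eq_iff forall_3 matrix_matrix_mult_def matrix_vector_mult_def
      transpose_def sum_3 mat_def)

lemma act_half_turn_right: "act (mat 1, half_turn) (X0_param u) = X0_param (flip_w u)"
  unfolding act_split matrix_inv_SO3[OF mat_1_SO3]
  unfolding X0_param_def half_turn_def flip_w_def
  by (simp add: vec_eq_iff forall_3 matrix_matrix_mult_def matrix_vector_mult_def
      transpose_def sum_3 mat_def)

lemma slice_neg_coord_0: "slice (neg_coord 0 w) = act (half_turn, mat 1) (slice w)"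
  unfolding slice_def act_half_turn_left
  by (simp add: slice_param_def std_param_def flip_v_def neg_coord_def Let_def)

lemma slice_coords_flip_w:
  assumes "i < 5"
  shows "slice_coords (flip_w u) i = neg_coord 1 (slice_coords u) i"
proof -
  have "i = 0 \<or> i = 1 \<or> i = 2 \<or> i = 3 \<or> i = 4" using assms by auto
  then show ?thesis unfolding slice_coords_def flip_w_def neg_coord_def
    by (elim disjE) (simp_all add: algebra_simps)
qed

text \<open>With \<open>c\<close>, \<open>T\<close>, \<open>D\<close> as in \<open>slice_param w\<close>, this is \<open>(T - 2 D) (T + 2 D)\<close> up to the factor
  \<open>(w\<^sub>0 w\<^sub>1)\<^sup>4 w\<^sub>2\<^sup>2\<close>; the two factors are the isotropic coordinates of \<open>flip_w (slice_param w)\<close>.\<close>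

definition slice_disc :: "(nat \<Rightarrow> complex) \<Rightarrow> complex" where
  "slice_disc w = (w 3 * (w 0 * w 1)\<^sup>2 - (w 2)\<^sup>2)\<^sup>2 * (w 2)\<^sup>2 - 4 * (w 4)\<^sup>2 * (w 0 * w 1) ^ 6"

lemma X0_genericity_flip_w_slice_param:
  assumes "slice_denom w \<noteq> 0" and "slice_disc w \<noteq> 0"
  shows "X0_genericity (flip_w (slice_param w)) \<noteq> 0"
proof -
  define c where "c = w 2 / (w 0 * w 1)"
  define T where "T = w 3 - c\<^sup>2"
  define D where "D = w 4 / c"
  have "slice_param w = std_param (w 0) (w 1) c T D"
    by (simp add: slice_param_def Let_def c_def T_def D_def)
  then have u: "flip_w (slice_param w)
      = (\<lambda>i. [w 0, - w 1, - c, (T + 1) / 2, - \<i> * D, - (\<i> * (T - 1) / 2), - D] ! i)"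
    by (simp add: flip_w_def std_param_def)
  have nz: "w 0 \<noteq> 0" "w 1 \<noteq> 0" "w 2 \<noteq> 0" using assms(1) by (auto simp: slice_denom_def)
  then have "c \<noteq> 0" by (simp add: c_def)
  have "slice_disc w = (T - 2 * D) * (T + 2 * D) * ((w 0 * w 1) ^ 4 * (w 2)\<^sup>2)"
    using nz unfolding slice_disc_def T_def D_def c_def by (simp add: field_simps) algebra
  moreover have "block_p (flip_w (slice_param w)) = T - 2 * D"
    and "block_q (flip_w (slice_param w)) = T + 2 * D"
    unfolding u by (simp_all add: block_p_def block_q_def field_simps)
  ultimately show ?thesis
    using nz \<open>c \<noteq> 0\<close> assms(2) unfolding X0_genericity_def by (simp add: u)
qed

lemma slice_neg_coord_1_in_orbit:
  assumes "slice_denom w \<noteq> 0" and "slice_disc w \<noteq> 0"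
  obtains k where "k \<in> Grp" and "act k (slice w) = slice (neg_coord 1 w)"
proof -
  let ?u = "flip_w (slice_param w)"
  obtain n where n: "n \<in> Grp" "act n (X0_param ?u) = slice (slice_coords ?u)"
    using X0_param_in_slice_orbit[OF X0_genericity_flip_w_slice_param[OF assms]] by blast
  have "slice (slice_coords ?u) = slice (neg_coord 1 w)"
    using slice_coords_slice_param[OF assms(1)]
    by (intro slice_cong) (simp add: slice_coords_flip_w neg_coord_def)
  have "act (grp_mult n (mat 1, half_turn)) (slice w) = act n (act (mat 1, half_turn) (slice w))"
    by (simp add: act_act[OF n(1) half_turn_Grp(2)])
  also have "\<dots> = slice (neg_coord 1 w)"
    using n(2) \<open>slice (slice_coords ?u) = slice (neg_coord 1 w)\<close>
    by (simp add: slice_def act_half_turn_right)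
  finally show thesis using that grp_mult_Grp[OF n(1) half_turn_Grp(2)] by blast
qed

section \<open>Vanishing on \<open>X2\<close>\<close>

lemma in_X2_iff:
  "x \<in> X2 \<longleftrightarrow> (\<forall>f. L2_poly f \<longrightarrow> (\<forall>h\<in>Grp. \<forall>y\<in>X0. f (act h y) = 0) \<longrightarrow> f x = 0)"
  by (simp add: X2_def zariski_closure_def)

lemma X2_vanishing_if_vanishing_on_X0_orbits:
  assumes "L2_poly f" and "\<And>h u. h \<in> Grp \<Longrightarrow> f (act h (X0_param u)) = 0" and "x \<in> X2"
  shows "f x = 0"
proof -
  have "\<forall>h\<in>Grp. \<forall>y\<in>X0. f (act h y) = 0"
    using assms(2) by (metis X0_obtain_param)
  then show ?thesis using assms(1,3) unfolding in_X2_iff by blast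
qed

lemma act_in_X2:
  assumes "h \<in> Grp" and "x \<in> X2"
  shows "act h x \<in> X2"
  unfolding in_X2_iff
proof (intro allI impI)
  fix f assume f: "L2_poly f" and vanish: "\<forall>k\<in>Grp. \<forall>y\<in>X0. f (act k y) = 0"
  have "\<forall>k\<in>Grp. \<forall>y\<in>X0. f (act h (act k y)) = 0"
    using vanish act_act[OF assms(1)] grp_mult_Grp[OF assms(1)] by simp
  then show "f (act h x) = 0"
    using assms(2) L2_poly_act[OF f] unfolding in_X2_iff by blast
qed

lemma X0_param_in_X2: "X0_param u \<in> X2"
  unfolding in_X2_iff using one_Grp act_one X0_param_in_X0 by metis

lemma slice_in_X2: "slice w \<in> X2"
  unfolding slice_def by (rule X0_param_in_X2)

lemma X0_genericity_nonzero: "X0_genericity (\<lambda>i. if i < 4 then 1 else 0) \<noteq> 0"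
  by (simp add: X0_genericity_def block_p_def block_q_def)

lemma X2_vanishing_if_vanishing_on_slice_orbits:
  assumes f: "L2_poly f"
    and vanish: "\<And>h w. h \<in> Grp \<Longrightarrow> slice_denom w \<noteq> 0 \<Longrightarrow> f (act h (slice w)) = 0"
    and "x \<in> X2"
  shows "f x = 0"
proof (rule X2_vanishing_if_vanishing_on_X0_orbits[OF f _ \<open>x \<in> X2\<close>])
  fix h u assume h: "h \<in> Grp"
  have "f (act h (X0_param v)) = 0" if gen: "X0_genericity v \<noteq> 0" for v
  proof -
    obtain n where n: "n \<in> Grp" "act n (X0_param v) = slice (slice_coords v)"
      using X0_param_in_slice_orbit[OF gen] by blast
    then have "act h (X0_param v) = act (grp_mult h (grp_inv n)) (slice (slice_coords v))"
      using act_act[OF h grp_inv_Grp[OF n(1)]] act_grp_inv_act[OF n(1)] by metis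
    then show ?thesis
      using vanish[OF grp_mult_Grp[OF h grp_inv_Grp[OF n(1)]] slice_denom_slice_coords[OF gen]]
      by simp
  qed
  then show "f (act h (X0_param u)) = 0"
    using polyfn_eq_0_if_eq_0_off_zeros[OF polyfn_X0_param[OF L2_poly_act[OF f]]
        polyfn_X0_genericity X0_genericity_nonzero] by blast
qed

lemma X2_vanishing_if_invariant_factor:
  assumes \<Phi>: "L2_poly \<Phi>" and \<Psi>: "L2_poly \<Psi>" and \<Psi>_act: "\<And>h x. h \<in> Grp \<Longrightarrow> \<Psi> (act h x) = \<Psi> x"
    and "x0 \<in> X2" and "\<Psi> x0 \<noteq> 0" and mult: "\<And>x. x \<in> X2 \<Longrightarrow> \<Psi> x * \<Phi> x = 0"
    and "x \<in> X2"
  shows "\<Phi> x = 0"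
proof -
  obtain h0 u0 where "h0 \<in> Grp" "\<Psi> (act h0 (X0_param u0)) \<noteq> 0"
    using X2_vanishing_if_vanishing_on_X0_orbits[OF \<Psi> _ \<open>x0 \<in> X2\<close>] \<open>\<Psi> x0 \<noteq> 0\<close> by blast
  then have "\<Psi> (X0_param u0) \<noteq> 0" using \<Psi>_act by simp
  show ?thesis
  proof (rule X2_vanishing_if_vanishing_on_X0_orbits[OF \<Phi> _ \<open>x \<in> X2\<close>])
    fix h u assume h: "h \<in> Grp"
    have "\<Psi> (X0_param v) * \<Phi> (act h (X0_param v)) = 0" for v
      using mult[OF act_in_X2[OF h X0_param_in_X2]] \<Psi>_act[OF h] by simp
    then show "\<Phi> (act h (X0_param u)) = 0"
      using polyfn_eq_0_if_mult_eq_0[OF polyfn_X0_param[OF L2_poly_act[OF \<Phi>]]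
          polyfn_X0_param[OF \<Psi>] \<open>\<Psi> (X0_param u0) \<noteq> 0\<close>] by blast
  qed
qed

lemma polyfn_slice_denom: "polyfn (coord_fns 5) slice_denom"
  unfolding slice_denom_def by (intro polyfn.mult polyfn_coord) simp_all

lemma slice_param_mult_denom:
  assumes "i < 7"
  shows "\<exists>Pc. polyfn (coord_fns 5) Pc \<and>
    (\<forall>w. slice_denom w \<noteq> 0 \<longrightarrow> slice_param w i * (slice_denom w)\<^sup>2 = Pc w)"
proof -
  let ?\<Delta> = "\<lambda>w. (w 0 * w 1 * w 2)\<^sup>2"
  let ?Pc = "\<lambda>w. [w 0 * ?\<Delta> w, w 1 * ?\<Delta> w, (w 2) ^ 3 * w 0 * w 1,
     (1 / 2) * (w 3 * ?\<Delta> w - (w 2) ^ 4 + ?\<Delta> w), - \<i> * (w 4 * (w 0 * w 1) ^ 3 * w 2),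
     (\<i> / 2) * (w 3 * ?\<Delta> w - (w 2) ^ 4 - ?\<Delta> w), w 4 * (w 0 * w 1) ^ 3 * w 2] ! i"
  have i: "i = 0 \<or> i = 1 \<or> i = 2 \<or> i = 3 \<or> i = 4 \<or> i = 5 \<or> i = 6" using assms by auto
  then have "polyfn (coord_fns 5) ?Pc"
    by (elim disjE) (auto intro!: polyfn.mult polyfn.const polyfn.add polyfn_diff polyfn_power
        polyfn_neg polyfn_divide_const polyfn_coord)
  moreover have "slice_param w i * (slice_denom w)\<^sup>2 = ?Pc w" if "slice_denom w \<noteq> 0" for w
  proof -
    have "w 0 \<noteq> 0" "w 1 \<noteq> 0" "w 2 \<noteq> 0" using that by (auto simp: slice_denom_def)
    with i show ?thesis
      unfolding slice_param_def std_param_def slice_denom_def Let_def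
      by (elim disjE) (simp_all add: field_simps power2_eq_square power3_eq_cube power4_eq_xxxx)
  qed
  ultimately show ?thesis by blast
qed

lemma L2_poly_slice_clear_denom:
  assumes "L2_poly f"
  obtains N F where "polyfn (coord_fns 5) F"
    and "\<And>w. slice_denom w \<noteq> 0 \<Longrightarrow> F w = f (slice w) * slice_denom w ^ (2 * N)"
proof -
  have "\<exists>N F. polyfn (coord_fns 5) F \<and>
      (\<forall>w. (slice_denom w)\<^sup>2 \<noteq> 0 \<longrightarrow> f (X0_param (slice_param w)) * ((slice_denom w)\<^sup>2) ^ N = F w)"
  proof (rule polyfn_comp_rational[OF polyfn_X0_param[OF assms]])
    show "polyfn (coord_fns 5) (\<lambda>w. (slice_denom w)\<^sup>2)"
      by (intro polyfn_power polyfn_slice_denom)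
    fix c assume "c \<in> coord_fns 7"
    then obtain i where "c = (\<lambda>u. u i)" "i < 7" by (auto simp: coord_fns_def)
    then show "\<exists>Pc. polyfn (coord_fns 5) Pc \<and>
        (\<forall>w. (slice_denom w)\<^sup>2 \<noteq> 0 \<longrightarrow> c (slice_param w) * (slice_denom w)\<^sup>2 = Pc w)"
      using slice_param_mult_denom by simp
  qed
  then obtain N F where "polyfn (coord_fns 5) F"
    and "\<forall>w. slice_denom w \<noteq> 0 \<longrightarrow> f (X0_param (slice_param w)) * ((slice_denom w)\<^sup>2) ^ N = F w"
    by auto
  then show thesis by (intro that[of F N]) (auto simp: slice_def power_mult)
qed

lemma L2_poly_slice_clear_denom2:
  assumes "L2_poly f" and "L2_poly g"
  obtains N F G where "polyfn (coord_fns 5) F" and "polyfn (coord_fns 5) G"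
    and "\<And>w. slice_denom w \<noteq> 0 \<Longrightarrow> F w = f (slice w) * slice_denom w ^ (2 * N)"
    and "\<And>w. slice_denom w \<noteq> 0 \<Longrightarrow> G w = g (slice w) * slice_denom w ^ (2 * N)"
proof -
  obtain N1 F1 N2 G1 where F1: "polyfn (coord_fns 5) F1" and G1: "polyfn (coord_fns 5) G1"
    and "\<And>w. slice_denom w \<noteq> 0 \<Longrightarrow> F1 w = f (slice w) * slice_denom w ^ (2 * N1)"
    and "\<And>w. slice_denom w \<noteq> 0 \<Longrightarrow> G1 w = g (slice w) * slice_denom w ^ (2 * N2)"
    using L2_poly_slice_clear_denom[OF assms(1)] L2_poly_slice_clear_denom[OF assms(2)] by metis
  then show thesis
    by (intro that[of "\<lambda>w. F1 w * slice_denom w ^ (2 * N2)" "\<lambda>w. G1 w * slice_denom w ^ (2 * N1)"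
          "N1 + N2"] polyfn.mult polyfn_power polyfn_slice_denom)
      (simp_all add: power_add algebra_simps)
qed

lemma slice_mult_eq_0_imp_eq_0:
  assumes \<Phi>: "L2_poly \<Phi>" and \<Psi>: "L2_poly \<Psi>"
    and "slice_denom w1 \<noteq> 0" and "\<Psi> (slice w1) \<noteq> 0"
    and mult: "\<And>w. slice_denom w \<noteq> 0 \<Longrightarrow> \<Psi> (slice w) * \<Phi> (slice w) = 0"
    and "slice_denom w \<noteq> 0"
  shows "\<Phi> (slice w) = 0"
proof -
  obtain N F G where F: "polyfn (coord_fns 5) F" and G: "polyfn (coord_fns 5) G"
    and F_eq: "\<And>w. slice_denom w \<noteq> 0 \<Longrightarrow> F w = \<Phi> (slice w) * slice_denom w ^ (2 * N)"
    and G_eq: "\<And>w. slice_denom w \<noteq> 0 \<Longrightarrow> G w = \<Psi> (slice w) * slice_denom w ^ (2 * N)"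
    using L2_poly_slice_clear_denom2[OF \<Phi> \<Psi>] by metis
  have "G w1 \<noteq> 0" using G_eq assms(3,4) by simp
  have "G x * F x = 0" if "slice_denom x \<noteq> 0" for x
  proof -
    have "G x * F x = (\<Psi> (slice x) * \<Phi> (slice x)) * slice_denom x ^ (4 * N)"
      using that by (simp add: F_eq G_eq power_add[symmetric] ac_simps)
    then show ?thesis using mult[OF that] by simp
  qed
  then have "G v * F v = 0" for v
    by (rule polyfn_eq_0_if_eq_0_off_zeros[OF polyfn.mult[OF G F] polyfn_slice_denom \<open>slice_denom w1 \<noteq> 0\<close>])
  then have "F w = 0" using polyfn_eq_0_if_mult_eq_0[OF F G \<open>G w1 \<noteq> 0\<close>] by blast
  then show ?thesis using F_eq[OF \<open>slice_denom w \<noteq> 0\<close>] \<open>slice_denom w \<noteq> 0\<close> by simp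
qed

section \<open>Invariant rational functions\<close>

lemma G_invariantD:
  "G_invariant f g \<Longrightarrow> h \<in> Grp \<Longrightarrow> x \<in> X2 \<Longrightarrow> f (act h x) * g x = f x * g (act h x)"
  by (simp add: G_invariant_def rat_eq_def)

lemma G_invariant_comp_act:
  assumes inv: "G_invariant f g" and h: "h \<in> Grp"
  shows "G_invariant (\<lambda>x. f (act h x)) (\<lambda>x. g (act h x))"
  unfolding G_invariant_def rat_eq_def
proof (intro ballI)
  fix k x assume k: "k \<in> Grp" and x: "x \<in> X2"
  define k' where "k' = grp_mult h (grp_mult k (grp_inv h))"
  have "k' \<in> Grp" unfolding k'_def by (intro grp_mult_Grp grp_inv_Grp h k)
  have k_inv: "grp_mult k (grp_inv h) \<in> Grp" by (intro grp_mult_Grp grp_inv_Grp h k)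
  have "act k' (act h x) = act h (act (grp_mult k (grp_inv h)) (act h x))"
    unfolding k'_def by (simp only: act_act[OF h k_inv])
  also have "\<dots> = act h (act k (act (grp_inv h) (act h x)))"
    by (simp only: act_act[OF k grp_inv_Grp[OF h]])
  finally have "act k' (act h x) = act h (act k x)" by (simp only: act_grp_inv_act[OF h])
  then show "((\<lambda>x. f (act h x)) \<circ> act k) x * g (act h x) = f (act h x) * ((\<lambda>x. g (act h x)) \<circ> act k) x"
    using G_invariantD[OF inv \<open>k' \<in> Grp\<close> act_in_X2[OF h x]] by simp
qed

lemma in_Cp_if_in_Cp_comp_act:
  assumes "in_Cp (\<lambda>x. f (act h x)) (\<lambda>x. g (act h x))" and h: "h \<in> Grp"
  shows "in_Cp f g"
proof -
  obtain A B where AB: "poly5 A" "poly5 B" "\<not> (\<forall>x\<in>X2. B (pmap x) = 0)"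
    and rel: "\<And>x. x \<in> X2 \<Longrightarrow> f (act h x) * B (pmap x) = A (pmap x) * g (act h x)"
    using assms(1) unfolding in_Cp_def rat_eq_def by auto
  have "\<forall>y\<in>X2. f y * B (pmap y) = A (pmap y) * g y"
  proof
    fix y assume "y \<in> X2"
    then show "f y * B (pmap y) = A (pmap y) * g y"
      using rel[OF act_in_X2[OF grp_inv_Grp[OF h]]]
      by (simp add: act_act_grp_inv h pmap_act grp_inv_Grp)
  qed
  then show ?thesis using AB unfolding in_Cp_def rat_eq_def o_def by blast
qed

lemma slice_denom_neg_coord_sq: "(slice_denom (neg_coord j w))\<^sup>2 = (slice_denom w)\<^sup>2"
  unfolding slice_denom_def neg_coord_def
  by (cases "j = 0"; cases "j = 1"; cases "j = 2") (simp_all add: power2_eq_square)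

lemma cleared_ratio_neg_coord_invariant:
  assumes inv: "G_invariant f g"
    and F: "polyfn (coord_fns 5) F" and G: "polyfn (coord_fns 5) G"
    and F_eq: "\<And>w. slice_denom w \<noteq> 0 \<Longrightarrow> F w = f (slice w) * slice_denom w ^ (2 * N)"
    and G_eq: "\<And>w. slice_denom w \<noteq> 0 \<Longrightarrow> G w = g (slice w) * slice_denom w ^ (2 * N)"
    and \<Delta>: "polyfn (coord_fns 5) \<Delta>" and "\<Delta> w0 \<noteq> 0" and "j < 5"
    and flip: "\<And>w. \<Delta> w \<noteq> 0 \<Longrightarrow>
      slice_denom w \<noteq> 0 \<and> (\<exists>k\<in>Grp. act k (slice w) = slice (neg_coord j w))"
  shows "F (neg_coord j w) * G w = F w * G (neg_coord j w)"
proof -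
  define X where "X v = F (neg_coord j v) * G v - F v * G (neg_coord j v)" for v
  have "X v = 0" if "\<Delta> v \<noteq> 0" for v
  proof -
    obtain k where k: "k \<in> Grp" "act k (slice v) = slice (neg_coord j v)" and "slice_denom v \<noteq> 0"
      using flip[OF \<open>\<Delta> v \<noteq> 0\<close>] by blast
    have "(slice_denom (neg_coord j v))\<^sup>2 \<noteq> 0"
      using slice_denom_neg_coord_sq \<open>slice_denom v \<noteq> 0\<close> by simp
    then have "slice_denom (neg_coord j v) \<noteq> 0" by simp
    moreover have "slice_denom (neg_coord j v) ^ (2 * N) = slice_denom v ^ (2 * N)"
      using slice_denom_neg_coord_sq by (simp add: power_mult)
    ultimately have "X v = (f (slice (neg_coord j v)) * g (slice v) - f (slice v) * g (slice (neg_coord j v)))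
        * (slice_denom v ^ (2 * N))\<^sup>2"
      using \<open>slice_denom v \<noteq> 0\<close> by (simp add: X_def F_eq G_eq power2_eq_square algebra_simps)
    also have "\<dots> = 0"
      using G_invariantD[OF inv k(1) slice_in_X2, of v] k(2) by simp
    finally show ?thesis .
  qed
  moreover have "polyfn (coord_fns 5) X"
    unfolding X_def by (intro polyfn_diff polyfn.mult polyfn_neg_coord F G \<open>j < 5\<close>)
  ultimately have "X w = 0" using polyfn_eq_0_if_eq_0_off_zeros[OF _ \<Delta> \<open>\<Delta> w0 \<noteq> 0\<close>] by blast
  then show ?thesis by (simp add: X_def)
qed

lemma X2_vanishing_if_invariant_and_vanishing_on_slice:
  assumes F: "L2_poly F" and g: "L2_poly g" and inv: "G_invariant F g"
    and "slice_denom w1 \<noteq> 0" and "g (slice w1) \<noteq> 0"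
    and vanish: "\<And>w. slice_denom w \<noteq> 0 \<Longrightarrow> F (slice w) = 0"
    and "x \<in> X2"
  shows "F x = 0"
proof (rule X2_vanishing_if_vanishing_on_slice_orbits[OF F _ \<open>x \<in> X2\<close>])
  fix h w assume h: "h \<in> Grp" and "slice_denom w \<noteq> 0"
  have "g (slice v) * F (act h (slice v)) = 0" if "slice_denom v \<noteq> 0" for v
    using G_invariantD[OF inv h slice_in_X2, of v] vanish[OF that] by (simp add: mult.commute)
  then show "F (act h (slice w)) = 0"
    using slice_mult_eq_0_imp_eq_0[OF L2_poly_act[OF F] g] assms(4,5) \<open>slice_denom w \<noteq> 0\<close>
    by blast
qed

theorem alg_indep_on_X2: "alg_indep_on_X2"
  unfolding alg_indep_on_X2_def
proof (intro allI impI)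
  fix P :: "(nat \<Rightarrow> complex) \<Rightarrow> complex" and z
  assume P: "poly5 P" and vanish: "\<forall>x\<in>X2. P (pmap x) = 0"
  have "P y = 0" if "slice_denom y \<noteq> 0" for y
  proof -
    define w where "w = y(0 := csqrt (y 0), 1 := csqrt (y 1))"
    have "slice_denom w \<noteq> 0" using that by (simp add: w_def slice_denom_def)
    then have "P y = P (pmap (slice w))"
      using poly5_pmap_slice[OF P] sq_coord_1_0_csqrt by (simp add: w_def)
    then show ?thesis using vanish slice_in_X2 by simp
  qed
  moreover have "slice_denom (\<lambda>_. 1) \<noteq> 0" by (simp add: slice_denom_def)
  ultimately show "P z = 0"
    using P polyfn_eq_0_if_eq_0_off_zeros[OF _ polyfn_slice_denom]
    unfolding poly5_iff_polyfn_coord_fns by blast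
qed

theorem G_invariant_if_in_Cp:
  assumes "rat_fun f g" and "in_Cp f g"
  shows "G_invariant f g"
proof -
  have f: "L2_poly f" and g: "L2_poly g" using assms(1) by (auto simp: rat_fun_def)
  obtain A B where B: "poly5 B" and "\<not> (\<forall>x\<in>X2. B (pmap x) = 0)"
    and rel: "\<And>x. x \<in> X2 \<Longrightarrow> f x * B (pmap x) = A (pmap x) * g x"
    using assms(2) unfolding in_Cp_def rat_eq_def o_def by blast
  then obtain x0 where "x0 \<in> X2" "B (pmap x0) \<noteq> 0" by blast
  show ?thesis unfolding G_invariant_def rat_eq_def
  proof (intro ballI)
    fix h x assume h: "h \<in> Grp" and "x \<in> X2"
    define E where "E y = f (act h y) * g y - f y * g (act h y)" for y
    have mult: "B (pmap y) * E y = 0" if "y \<in> X2" for y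
    proof -
      have "B (pmap y) * E y
          = (f (act h y) * B (pmap (act h y))) * g y - (f y * B (pmap y)) * g (act h y)"
        by (simp add: E_def pmap_act[OF h] algebra_simps)
      also have "\<dots> = 0"
        unfolding rel[OF act_in_X2[OF h that]] rel[OF that] by (simp add: pmap_act[OF h])
      finally show ?thesis .
    qed
    have "L2_poly E"
      unfolding E_def by (intro L2_poly_diff L2_poly_mult L2_poly_act f g)
    then have "E x = 0"
      by (rule X2_vanishing_if_invariant_factor[OF _ L2_poly_pmap[OF B] _ \<open>x0 \<in> X2\<close>
            \<open>B (pmap x0) \<noteq> 0\<close> mult \<open>x \<in> X2\<close>]) (simp add: pmap_act)
    then show "(f \<circ> act h) x * g x = f x * (g \<circ> act h) x" by (simp add: E_def)
  qed
qed

lemma slice_ratio_eq_ratio_of_squares: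
  assumes inv: "G_invariant f g"
    and F: "polyfn (coord_fns 5) F" and G: "polyfn (coord_fns 5) G" and "G w1 \<noteq> 0"
    and F_eq: "\<And>w. slice_denom w \<noteq> 0 \<Longrightarrow> F w = f (slice w) * slice_denom w ^ (2 * N)"
    and G_eq: "\<And>w. slice_denom w \<noteq> 0 \<Longrightarrow> G w = g (slice w) * slice_denom w ^ (2 * N)"
  obtains A B z where "poly5 A" and "poly5 B" and "B z \<noteq> 0"
    and "\<And>w. F w * B (sq_coord 1 (sq_coord 0 w)) = A (sq_coord 1 (sq_coord 0 w)) * G w"
proof -
  have flip0: "F (neg_coord 0 w) * G w = F w * G (neg_coord 0 w)" for w
  proof (rule cleared_ratio_neg_coord_invariant[OF inv F G F_eq G_eq polyfn_slice_denom])
    show "slice_denom (\<lambda>_. 1) \<noteq> 0" by (simp add: slice_denom_def)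
  qed (use slice_neg_coord_0 half_turn_Grp in auto)
  have flip1: "F (neg_coord 1 w) * G w = F w * G (neg_coord 1 w)" for w
  proof (rule cleared_ratio_neg_coord_invariant[OF inv F G F_eq G_eq,
        where \<Delta> = "\<lambda>w. slice_denom w * slice_disc w"])
    show "polyfn (coord_fns 5) (\<lambda>w. slice_denom w * slice_disc w)"
      unfolding slice_disc_def
      by (intro polyfn.mult polyfn_diff polyfn_power polyfn.const polyfn_slice_denom polyfn_coord)
        simp_all
    show "slice_denom (\<lambda>i. if i = 3 then 2 else if i = 4 then 0 else 1)
        * slice_disc (\<lambda>i. if i = 3 then 2 else if i = 4 then 0 else 1) \<noteq> 0"
      by (simp add: slice_denom_def slice_disc_def)
  qed (use slice_neg_coord_1_in_orbit in \<open>auto simp del: mult_eq_0_iff\<close>)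
  show thesis
    using ratio_two_neg_coord_invariant_imp_sq[OF F G \<open>G w1 \<noteq> 0\<close>, of 0 1] flip0 flip1 that
    unfolding poly5_iff_polyfn_coord_fns by auto
qed

lemma G_invariant_diff_pmap:
  assumes inv: "G_invariant f g"
  shows "G_invariant (\<lambda>x. f x * B (pmap x) - A (pmap x) * g x) g"
  unfolding G_invariant_def rat_eq_def
proof (intro ballI)
  fix h x assume h: "h \<in> Grp" and "x \<in> X2"
  have "(f (act h x) * B (pmap (act h x)) - A (pmap (act h x)) * g (act h x)) * g x
      = (f (act h x) * g x) * B (pmap x) - A (pmap x) * g (act h x) * g x"
    by (simp add: pmap_act[OF h] algebra_simps)
  also have "\<dots> = (f x * B (pmap x) - A (pmap x) * g x) * g (act h x)"
    unfolding G_invariantD[OF inv h \<open>x \<in> X2\<close>] by (simp add: algebra_simps)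
  finally show "((\<lambda>x. f x * B (pmap x) - A (pmap x) * g x) \<circ> act h) x * g x
      = (f x * B (pmap x) - A (pmap x) * g x) * (g \<circ> act h) x"
    by simp
qed

lemma in_Cp_if_invariant_and_nonzero_on_slice:
  assumes f: "L2_poly f" and g: "L2_poly g" and inv: "G_invariant f g"
    and "slice_denom w1 \<noteq> 0" and "g (slice w1) \<noteq> 0"
  shows "in_Cp f g"
proof -
  obtain N F G where F: "polyfn (coord_fns 5) F" and G: "polyfn (coord_fns 5) G"
    and F_eq: "\<And>w. slice_denom w \<noteq> 0 \<Longrightarrow> F w = f (slice w) * slice_denom w ^ (2 * N)"
    and G_eq: "\<And>w. slice_denom w \<noteq> 0 \<Longrightarrow> G w = g (slice w) * slice_denom w ^ (2 * N)"
    using L2_poly_slice_clear_denom2[OF f g] by metis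
  have "G w1 \<noteq> 0" using G_eq assms(4,5) by simp
  then obtain A B z where A: "poly5 A" and B: "poly5 B" and "B z \<noteq> 0"
    and rel: "\<And>w. F w * B (sq_coord 1 (sq_coord 0 w)) = A (sq_coord 1 (sq_coord 0 w)) * G w"
    using slice_ratio_eq_ratio_of_squares[OF inv F G _ F_eq G_eq] by metis
  define E where "E x = f x * B (pmap x) - A (pmap x) * g x" for x
  have "E (slice w) = 0" if "slice_denom w \<noteq> 0" for w
  proof -
    have "E (slice w) * slice_denom w ^ (2 * N)
        = F w * B (sq_coord 1 (sq_coord 0 w)) - A (sq_coord 1 (sq_coord 0 w)) * G w"
      using that by (simp add: E_def F_eq G_eq poly5_pmap_slice[OF A] poly5_pmap_slice[OF B]
          algebra_simps)
    then show ?thesis using that rel[of w] by simp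
  qed
  moreover have "L2_poly E"
    unfolding E_def by (intro L2_poly_diff L2_poly_mult L2_poly_pmap A B f g)
  moreover have "G_invariant E g"
    unfolding E_def by (rule G_invariant_diff_pmap[OF inv])
  ultimately have "\<forall>x\<in>X2. E x = 0"
    using X2_vanishing_if_invariant_and_vanishing_on_slice[OF _ g] assms(4,5) by blast
  moreover have "\<not> (\<forall>x\<in>X2. B (pmap x) = 0)"
    using alg_indep_on_X2 B \<open>B z \<noteq> 0\<close> unfolding alg_indep_on_X2_def by blast
  ultimately show ?thesis
    using A B unfolding in_Cp_def rat_eq_def E_def o_def by auto
qed

theorem in_Cp_if_G_invariant:
  assumes "rat_fun f g" and "G_invariant f g"
  shows "in_Cp f g"
proof -
  have f: "L2_poly f" and g: "L2_poly g" and "\<not> (\<forall>x\<in>X2. g x = 0)"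
    using assms(1) by (auto simp: rat_fun_def)
  then obtain h w1 where h: "h \<in> Grp" and "slice_denom w1 \<noteq> 0" "g (act h (slice w1)) \<noteq> 0"
    using X2_vanishing_if_vanishing_on_slice_orbits[OF g] by blast
  then have "in_Cp (\<lambda>x. f (act h x)) (\<lambda>x. g (act h x))"
    by (intro in_Cp_if_invariant_and_nonzero_on_slice L2_poly_act f g G_invariant_comp_act assms(2))
  then show ?thesis using h by (rule in_Cp_if_in_Cp_comp_act)
qed

theorem corollaryB7:
  shows "alg_indep_on_X2 \<and>
    (\<forall>f g. rat_fun f g \<longrightarrow> (G_invariant f g \<longleftrightarrow> in_Cp f g))"
  using alg_indep_on_X2 in_Cp_if_G_invariant G_invariant_if_in_Cp by blast

end
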